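(* Define on $(0,\pi/2)$ \[ A(x)=(\sin x-x\cos x)^2\cos x,\quad B(x)=x(\sin x-x\cos x)\sin^2x,\quad C(x)=-(2x^2\cos x-x\sin x-\cos x\sin^2x), \] and $g_2(x)=\dfrac{C(x)-\frac85A(x)}{B(x)-3A(x)}$. Then (i) $B(x)-3A(x)>0$ for $x\in(0,\pi/2)$; (ii) $g_2$ is increasing on $(0,\pi/2)$ and $\frac{34}{35}<g_2(x)<1$ for $x\in(0,\pi/2)$. *)

theory Defs
  imports Complex_Main
begin

definition lemA :: "real \<Rightarrow> real" where
  "lemA x = (sin x - x * cos x)^2 * cos x"

definition lemB :: "real \<Rightarrow> real" where
  "lemB x = x * (sin x - x * cos x) * (sin x)^2"

definition lemC :: "real \<Rightarrow> real" where
  "lemC x = - (2 * x^2 * cos x - x * sin x - cos x * (sin x)^2)"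

definition g2 :: "real \<Rightarrow> real" where
  "g2 x = (lemC x - 8/5 * lemA x) / (lemB x - 3 * lemA x)"

end

theory Submission
  imports Defs
begin

text \<open>
  Write \<open>t = tan x\<close>. Then \<open>lemB x - 3 * lemA x\<close> and \<open>lemC x - 8/5 * lemA x\<close> are
  \<open>cos\<^sup>3 x\<close> times polynomials \<open>D(x, t)\<close> and \<open>N(x, t)\<close>, so \<open>g2 = N / D\<close> and \<open>g2' = W / D\<^sup>2\<close> for a
  third polynomial \<open>W\<close>. All claims thus amount to the positivity of \<open>D\<close>, \<open>W\<close>, \<open>D - N\<close> and
  \<open>35 N - 34 D\<close> on the curve \<open>x = arctan t\<close>, \<open>t > 0\<close>. The arctangent is squeezed between
  rational functions whose difference with it has a derivative of constant sign; the two simplest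
  ones settle \<open>D = (t - x) * ((3 + t\<^sup>2) * x - 3 * t)\<close>. Since \<open>W\<close> and
  \<open>D - N\<close> are nondecreasing in \<open>x\<close> beyond an explicit point and \<open>35 N - 34 D\<close> is concave in \<open>x\<close>,
  it suffices to check positivity at these rational bounds, which turns every claim into the
  positivity of a univariate polynomial on a compact interval: in \<open>t\<^sup>2\<close> for \<open>t \<le> 2\<close>, and in
  \<open>u = 1/t\<close> for \<open>t \<ge> 2\<close>, where \<open>arctan t = pi/2 - arctan u\<close>. Each of these is certified by
  writing the polynomial, on a few subintervals, as an average of positive rationals.
\<close>

lemma pos_of_scaled_eq:
  fixes s z w :: real
  assumes "s * z = w" "0 < s" "0 < w"
  shows "0 < z"
  using assms zero_less_mult_pos by metis

lemma quartic_expansion_mono: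
  fixes f :: "real \<Rightarrow> real"
  assumes expand: "\<And>h. s * (f (p + h) - f p) = d1 * h + d2 * h^2 + d3 * h^3 + d4 * h^4"
    and "0 < s" "0 \<le> d1" "0 \<le> d2" "0 \<le> d3" "0 \<le> d4" "p \<le> x" "x \<le> y"
  shows "f x \<le> f y"
proof -
  let ?g = "\<lambda>h. d1 * h + d2 * h^2 + d3 * h^3 + d4 * h^4"
  have "?g (x - p) \<le> ?g (y - p)"
    using assms(3-8) by (intro add_mono mult_left_mono power_mono) auto
  then have "s * (f x - f p) \<le> s * (f y - f p)"
    using expand[of "x - p"] expand[of "y - p"] by simp
  then show ?thesis using \<open>0 < s\<close> by simp
qed

lemma concave_quadratic_pos:
  fixes a0 a1 a2 x v :: real
  assumes "0 < a0" "0 < a0 + a1 * v - a2 * v^2" "0 \<le> a2" "0 \<le> x" "x \<le> v"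
  shows "0 < a0 + a1 * x - a2 * x^2"
proof (cases "x = 0")
  case False
  with assms have "0 < x" "0 < v" by simp_all
  have "a0 + a1 * x - a2 * x^2
      = (1 - x / v) * a0 + x / v * (a0 + a1 * v - a2 * v^2) + a2 * x * (v - x)"
    using \<open>0 < v\<close> by (simp add: field_simps power2_eq_square)
  moreover have "0 \<le> (1 - x / v) * a0"
    using assms \<open>0 < v\<close> by (intro mult_nonneg_nonneg) (simp_all add: field_simps)
  moreover have "0 < x / v * (a0 + a1 * v - a2 * v^2)"
    using assms \<open>0 < x\<close> \<open>0 < v\<close> by (intro mult_pos_pos) simp_all
  moreover have "0 \<le> a2 * x * (v - x)"
    using assms by (intro mult_nonneg_nonneg) simp_all
  ultimately show ?thesis by linarith
qed (use assms in simp)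

text \<open>
  \<open>geom_mix [c\<^sub>0, \<dots>, c\<^sub>n] s = (\<Sum>k<n. (1 - s) * s^k * c\<^sub>k) + s^n * c\<^sub>n\<close> is an average of the
  \<open>c\<^sub>k\<close> for \<open>0 \<le> s \<le> 1\<close>. A polynomial in \<open>s\<close> has this form exactly when the \<open>c\<^sub>k\<close> are the
  partial sums of its coefficients; if they are all positive, it is positive on \<open>[0, 1]\<close>.
\<close>

fun geom_mix :: "real list \<Rightarrow> real \<Rightarrow> real" where
  "geom_mix [] s = 0"
| "geom_mix [c] s = c"
| "geom_mix (c # d # cs) s = (1 - s) * c + s * geom_mix (d # cs) s"

lemma geom_mix_pos:
  assumes "0 \<le> s" "s \<le> 1" "cs \<noteq> []" "\<forall>c\<in>set cs. 0 < c"
  shows "0 < geom_mix cs s"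
  using assms
proof (induction cs s rule: geom_mix.induct)
  case (3 c d cs s)
  then have "0 < c" "0 < geom_mix (d # cs) s" by simp_all
  with \<open>0 \<le> s\<close> \<open>s \<le> 1\<close> show ?case
    by (cases "s = 1") (auto intro!: add_pos_nonneg mult_nonneg_nonneg)
qed auto

lemma pos_by_geom_mix:
  fixes f :: "real \<Rightarrow> real"
  assumes cert: "\<And>s. f (a + (b - a) * s) = geom_mix cs s"
    and "cs \<noteq> []" "\<forall>c\<in>set cs. 0 < c"
    and "a < b" "a \<le> y" "y \<le> b"
  shows "0 < f y"
proof -
  define s where "s = (y - a) / (b - a)"
  have "y = a + (b - a) * s" "0 \<le> s" "s \<le> 1"
    using assms(4-6) by (simp_all add: s_def)
  then show ?thesis using cert geom_mix_pos assms(2,3) by metis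
qed

section \<open>Rational bounds for the arctangent\<close>

text \<open>
  The hypothesis on \<open>c * y^k\<close> says that \<open>arctan - P / Q\<close> has derivative
  \<open>c * y^k / ((1 + y\<^sup>2) * Q\<^sup>2)\<close>.
\<close>

lemma arctan_rational_bound:
  fixes P Q P' Q' :: "real \<Rightarrow> real"
  assumes P: "\<And>y. (P has_real_derivative P' y) (at y)"
    and Q: "\<And>y. (Q has_real_derivative Q' y) (at y)"
    and Q_pos: "\<And>y. 0 < Q y" and "P 0 = 0"
    and wronskian: "\<And>y. (Q y)^2 - (1 + y^2) * (P' y * Q y - P y * Q' y) = c * y^k"
    and "c \<noteq> 0" "0 < t"
  shows "0 < c * (arctan t - P t / Q t)"
proof -
  let ?f = "\<lambda>y. c * (arctan y - P y / Q y)"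
  have deriv: "(?f has_real_derivative c^2 * y^k / ((1 + y^2) * (Q y)^2)) (at y)" for y
  proof -
    have "0 < 1 + y^2" by (simp add: add_pos_nonneg)
    then have "Q y \<noteq> 0" "1 + y^2 \<noteq> 0" using Q_pos[of y] by simp_all
    then show ?thesis
      by (intro DERIV_cong[OF DERIV_cmult[OF DERIV_diff[OF DERIV_arctan DERIV_divide[OF P Q]]]])
         (use wronskian[of y] in \<open>simp_all add: field_simps power2_eq_square\<close>)
  qed
  have "?f 0 < ?f t"
  proof (rule DERIV_pos_imp_increasing_open[OF \<open>0 < t\<close>])
    show "\<exists>d. (?f has_real_derivative d) (at y) \<and> 0 < d" if "0 < y" for y
    proof (intro exI conjI)
      show "0 < c^2 * y^k / ((1 + y^2) * (Q y)^2)"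
        using that \<open>c \<noteq> 0\<close> Q_pos[of y] by (simp add: add_pos_nonneg)
    qed (rule deriv)
    show "continuous_on {0..t} ?f"
      using deriv by (intro DERIV_atLeastAtMost_imp_continuous_on) blast
  qed
  then show ?thesis using \<open>P 0 = 0\<close> by simp
qed

lemma arctan_lt_self:
  assumes "0 < t"
  shows "arctan t < t"
proof -
  have "0 < (-1) * (arctan t - t / 1)"
    by (rule arctan_rational_bound[where P = "\<lambda>y. y" and P' = "\<lambda>_. 1" and Q = "\<lambda>_. 1"
          and Q' = "\<lambda>_. 0" and k = 2]) (auto intro: derivative_eq_intros simp: assms)
  then show ?thesis by simp
qed

lemma arctan_gt_rational:
  assumes "0 < t"
  shows "3 * t < (3 + t^2) * arctan t"
proof -
  have "0 < 4 * (arctan t - 3 * t / (3 + t^2))"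
  proof (rule arctan_rational_bound[where P = "\<lambda>y. 3 * y" and P' = "\<lambda>_. 3" and Q = "\<lambda>y. 3 + y^2"
        and Q' = "\<lambda>y. 2 * y" and k = 4])
    show "(3 + y^2)^2 - (1 + y^2) * (3 * (3 + y^2) - 3 * y * (2 * y)) = 4 * y^4" for y :: real
      by algebra
  qed (auto intro!: derivative_eq_intros simp: assms add_pos_nonneg)
  then show ?thesis by (simp add: field_simps add_pos_nonneg)
qed

text \<open>
  \<open>pade_Pn y / pade_Qn y\<close> is the \<open>n\<close>-th convergent of the continued fraction
  \<open>arctan y = y / (1 + y\<^sup>2 / (3 + 4 y\<^sup>2 / (5 + 9 y\<^sup>2 / (7 + \<dots>))))\<close>, whose convergents of
  index 0 and 1 appear in the two lemmas above; even ones lie above \<open>arctan\<close>, odd ones below.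
\<close>

definition pade_P2 :: "real \<Rightarrow> real" where "pade_P2 y = 15 * y + 4 * y^3"
definition pade_Q2 :: "real \<Rightarrow> real" where "pade_Q2 y = 15 + 9 * y^2"
definition pade_P3 :: "real \<Rightarrow> real" where "pade_P3 y = 105 * y + 55 * y^3"
definition pade_Q3 :: "real \<Rightarrow> real" where "pade_Q3 y = 105 + 90 * y^2 + 9 * y^4"
definition pade_P8 :: "real \<Rightarrow> real" where
  "pade_P8 y = 34459425 * y + 61486425 * y^3 + 33648615 * y^5 + 5742495 * y^7 + 147456 * y^9"
definition pade_Q8 :: "real \<Rightarrow> real" where
  "pade_Q8 y = 34459425 + 72972900 * y^2 + 51081030 * y^4 + 13097700 * y^6 + 893025 * y^8"
definition pade_P9 :: "real \<Rightarrow> real" where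
  "pade_P9 y = 654729075 * y + 1332431100 * y^3 + 891080190 * y^5 + 216602100 * y^7
     + 13852575 * y^9"
definition pade_Q9 :: "real \<Rightarrow> real" where
  "pade_Q9 y = 654729075 + 1550674125 * y^2 + 1277025750 * y^4 + 425675250 * y^6
     + 49116375 * y^8 + 893025 * y^10"

lemma pade_Q_pos: "0 < pade_Q2 y" "0 < pade_Q3 y" "0 < pade_Q8 y" "0 < pade_Q9 y"
  unfolding pade_Q2_def pade_Q3_def pade_Q8_def pade_Q9_def
  by (intro add_pos_nonneg mult_nonneg_nonneg; simp)+

lemma arctan_lt_pade2:
  assumes "0 < t"
  shows "arctan t < pade_P2 t / pade_Q2 t"
proof -
  have "0 < (-36) * (arctan t - pade_P2 t / pade_Q2 t)"
  proof (rule arctan_rational_bound[where P' = "\<lambda>y. 15 + 12 * y^2" and Q' = "\<lambda>y. 18 * y"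
        and k = 6])
    show "(pade_P2 has_real_derivative 15 + 12 * y^2) (at y)"
      and "(pade_Q2 has_real_derivative 18 * y) (at y)" for y
      unfolding pade_P2_def[abs_def] pade_Q2_def[abs_def] by (auto intro!: derivative_eq_intros)
    show "(pade_Q2 y)^2 - (1 + y^2) * ((15 + 12 * y^2) * pade_Q2 y - pade_P2 y * (18 * y))
        = (-36) * y^6" for y
      unfolding pade_P2_def pade_Q2_def by algebra
  qed (simp_all add: assms pade_Q_pos pade_P2_def)
  then show ?thesis by simp
qed

lemma pade3_lt_arctan:
  assumes "0 < t"
  shows "pade_P3 t / pade_Q3 t < arctan t"
proof -
  have "0 < 576 * (arctan t - pade_P3 t / pade_Q3 t)"
  proof (rule arctan_rational_bound[where P' = "\<lambda>y. 105 + 165 * y^2"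
        and Q' = "\<lambda>y. 180 * y + 36 * y^3" and k = 8])
    show "(pade_P3 has_real_derivative 105 + 165 * y^2) (at y)"
      and "(pade_Q3 has_real_derivative 180 * y + 36 * y^3) (at y)" for y
      unfolding pade_P3_def[abs_def] pade_Q3_def[abs_def] by (auto intro!: derivative_eq_intros)
    show "(pade_Q3 y)^2
        - (1 + y^2) * ((105 + 165 * y^2) * pade_Q3 y - pade_P3 y * (180 * y + 36 * y^3))
        = 576 * y^8" for y
      unfolding pade_P3_def pade_Q3_def by algebra
  qed (simp_all add: assms pade_Q_pos pade_P3_def)
  then show ?thesis by simp
qed

lemma arctan_lt_pade8:
  assumes "0 < t"
  shows "arctan t < pade_P8 t / pade_Q8 t"
proof -
  let ?P' = "\<lambda>y. 34459425 + 184459275 * y^2 + 168243075 * y^4 + 40197465 * y^6 + 1327104 * y^8"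
  let ?Q' = "\<lambda>y. 145945800 * y + 204324120 * y^3 + 78586200 * y^5 + 7144200 * y^7"
  have "0 < (-131681894400) * (arctan t - pade_P8 t / pade_Q8 t)"
  proof (rule arctan_rational_bound[where P' = ?P' and Q' = ?Q' and k = 18])
    show "(pade_P8 has_real_derivative ?P' y) (at y)"
      and "(pade_Q8 has_real_derivative ?Q' y) (at y)" for y
      unfolding pade_P8_def[abs_def] pade_Q8_def[abs_def] by (auto intro!: derivative_eq_intros)
    show "(pade_Q8 y)^2 - (1 + y^2) * (?P' y * pade_Q8 y - pade_P8 y * ?Q' y)
        = (-131681894400) * y^18" for y
      unfolding pade_P8_def pade_Q8_def by algebra
  qed (simp_all add: assms pade_Q_pos pade_P8_def)
  then show ?thesis by simp
qed

lemma pade9_lt_arctan: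
  assumes "0 < t"
  shows "pade_P9 t / pade_Q9 t < arctan t"
proof -
  let ?P' = "\<lambda>y. 654729075 + 3997293300 * y^2 + 4455400950 * y^4 + 1516214700 * y^6
    + 124673175 * y^8"
  let ?Q' = "\<lambda>y. 3101348250 * y + 5108103000 * y^3 + 2554051500 * y^5 + 392931000 * y^7
    + 8930250 * y^9"
  have "0 < 13168189440000 * (arctan t - pade_P9 t / pade_Q9 t)"
  proof (rule arctan_rational_bound[where P' = ?P' and Q' = ?Q' and k = 20])
    show "(pade_P9 has_real_derivative ?P' y) (at y)"
      and "(pade_Q9 has_real_derivative ?Q' y) (at y)" for y
      unfolding pade_P9_def[abs_def] pade_Q9_def[abs_def] by (auto intro!: derivative_eq_intros)
    show "(pade_Q9 y)^2 - (1 + y^2) * (?P' y * pade_Q9 y - pade_P9 y * ?Q' y)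
        = 13168189440000 * y^20" for y
      unfolding pade_P9_def pade_Q9_def by algebra
  qed (simp_all add: assms pade_Q_pos pade_P9_def)
  then show ?thesis by simp
qed

lemma pade2_le_self:
  assumes "0 \<le> u"
  shows "pade_P2 u / pade_Q2 u \<le> u"
proof -
  have "u * pade_Q2 u - pade_P2 u = 5 * u^3" unfolding pade_P2_def pade_Q2_def by algebra
  moreover have "0 \<le> u^3" using assms by simp
  ultimately have "pade_P2 u \<le> u * pade_Q2 u" by linarith
  then show ?thesis using pade_Q_pos(1)[of u] by (simp add: pos_divide_le_eq)
qed

lemma pi_bounds: "333/106 < pi" "pi < 3927/1250"
  using pade9_lt_arctan[of 1] arctan_lt_pade8[of 1]
  by (simp_all add: arctan_one pade_P8_def pade_Q8_def pade_P9_def pade_Q9_def)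

lemma arctan_inverse_bounds:
  assumes "0 < u"
  shows "333/212 - pade_P2 u / pade_Q2 u < arctan (1 / u)"
    and "arctan (1 / u) < 3927/2500 - pade_P3 u / pade_Q3 u"
  using arctan_inverse[of u] assms arctan_lt_pade2[OF assms] pade3_lt_arctan[OF assms] pi_bounds
  by simp_all

section \<open>A polynomial model of g2\<close>

definition g2_num :: "real \<Rightarrow> real \<Rightarrow> real" where
  "g2_num x t = (- 18/5 - 2 * t^2) * x^2 + (21/5 * t + t^3) * x - 3/5 * t^2"

definition g2_den :: "real \<Rightarrow> real \<Rightarrow> real" where
  "g2_den x t = - (3 + t^2) * x^2 + (6 * t + t^3) * x - 3 * t^2"

definition g2_deriv_num :: "real \<Rightarrow> real \<Rightarrow> real" where
  "g2_deriv_num x t = (- 9 * t^3 - 12/5 * t^5) + (27 * t^2 + 87/5 * t^4 - 12/5 * t^6) * x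
     + (- 27 * t - 114/5 * t^3 + 13/5 * t^5) * x^2 + (9 + 3 * t^2 - 5 * t^4 + t^6) * x^3
     + (24/5 * t + 24/5 * t^3) * x^4"

definition g2_upper_gap :: "real \<Rightarrow> real \<Rightarrow> real" where
  "g2_upper_gap x t = g2_den x t - g2_num x t"

definition g2_lower_gap :: "real \<Rightarrow> real \<Rightarrow> real" where
  "g2_lower_gap x t = 35 * g2_num x t - 34 * g2_den x t"

lemma lemB_lemC_tan:
  assumes "cos x \<noteq> 0"
  shows "lemB x - 3 * lemA x = (cos x)^3 * g2_den x (tan x)"
    and "lemC x - 8/5 * lemA x = (cos x)^3 * g2_num x (tan x)"
proof -
  define c where "c = cos x"
  define t where "t = tan x"
  have sin: "sin x = t * c" using assms by (simp add: t_def c_def tan_def)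
  have pyth: "c^2 * (1 + t^2) = 1"
    using sin_cos_squared_add[of x]
    by (simp add: sin c_def[symmetric] algebra_simps power_mult_distrib)
  show "lemB x - 3 * lemA x = (cos x)^3 * g2_den x (tan x)"
    unfolding lemB_def lemA_def g2_den_def sin c_def[symmetric] t_def[symmetric] by algebra
  show "lemC x - 8/5 * lemA x = (cos x)^3 * g2_num x (tan x)"
    using pyth unfolding lemC_def lemA_def g2_num_def sin c_def[symmetric] t_def[symmetric]
    by algebra
qed

lemma g2_eq:
  assumes "0 < x" "x < pi/2"
  shows "g2 x = g2_num x (tan x) / g2_den x (tan x)"
proof -
  have cos: "0 < cos x" using assms by (simp add: cos_gt_zero_pi)
  show ?thesis
    unfolding g2_def lemB_lemC_tan[OF less_imp_neq[OF cos, symmetric]] using cos by simp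
qed

definition g2_num_slope :: "real \<Rightarrow> real \<Rightarrow> real" where
  "g2_num_slope x t = 2 * (- 18/5 - 2 * t^2) * x + 21/5 * t + t^3
     + (- 4 * t * x^2 + (21/5 + 3 * t^2) * x - 6/5 * t) * (1 + t^2)"

definition g2_den_slope :: "real \<Rightarrow> real \<Rightarrow> real" where
  "g2_den_slope x t = - 2 * (3 + t^2) * x + 6 * t + t^3
     + (- 2 * t * x^2 + (6 + 3 * t^2) * x - 6 * t) * (1 + t^2)"

lemma inverse_cos_square: "cos x \<noteq> 0 \<Longrightarrow> inverse ((cos x)^2) = 1 + (tan x)^2"
  by (simp add: tan_sec power_inverse)

lemma g2_num_tan_deriv:
  assumes "cos x \<noteq> 0"
  shows "((\<lambda>y. g2_num y (tan y)) has_real_derivative g2_num_slope x (tan x)) (at x)"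
  unfolding g2_num_def
  by (rule DERIV_cong, (rule derivative_eq_intros refl assms)+)
     (simp add: inverse_cos_square[OF assms] g2_num_slope_def; algebra)

lemma g2_den_tan_deriv:
  assumes "cos x \<noteq> 0"
  shows "((\<lambda>y. g2_den y (tan y)) has_real_derivative g2_den_slope x (tan x)) (at x)"
  unfolding g2_den_def
  by (rule DERIV_cong, (rule derivative_eq_intros refl assms)+)
     (simp add: inverse_cos_square[OF assms] g2_den_slope_def; algebra)

lemma g2_deriv_num_eq:
  "g2_num_slope x t * g2_den x t - g2_num x t * g2_den_slope x t = g2_deriv_num x t"
  unfolding g2_num_slope_def g2_den_slope_def g2_num_def g2_den_def g2_deriv_num_def by algebra

lemma g2_has_derivative:
  assumes "0 < x" "x < pi/2" and den: "g2_den x (tan x) \<noteq> 0"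
  shows "(g2 has_real_derivative g2_deriv_num x (tan x) / (g2_den x (tan x))^2) (at x)"
proof -
  have "cos x \<noteq> 0" using assms by (simp add: cos_gt_zero_pi less_imp_neq[symmetric])
  then have "((\<lambda>y. g2_num y (tan y) / g2_den y (tan y)) has_real_derivative
      g2_deriv_num x (tan x) / (g2_den x (tan x))^2) (at x)"
    by (intro DERIV_cong[OF DERIV_divide[OF g2_num_tan_deriv g2_den_tan_deriv den]])
       (simp_all add: g2_deriv_num_eq power2_eq_square)
  then show ?thesis
    by (rule has_field_derivative_transform_within_open[where S = "{0<..<pi/2}"])
       (use assms g2_eq in auto)
qed

lemma g2_den_arctan_pos:
  assumes "0 < t"
  shows "0 < g2_den (arctan t) t"
proof -
  have "g2_den (arctan t) t = (t - arctan t) * ((3 + t^2) * arctan t - 3 * t)"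
    unfolding g2_den_def by algebra
  then show ?thesis using arctan_lt_self[OF assms] arctan_gt_rational[OF assms] by simp
qed

lemma g2_upper_gap_mono:
  assumes "0 \<le> t" "0 \<le> a" "a \<le> x"
  shows "g2_upper_gap a t \<le> g2_upper_gap x t"
proof -
  have "g2_upper_gap x t - g2_upper_gap a t = (x - a) * ((3/5 + t^2) * (a + x) + 9/5 * t)"
    unfolding g2_upper_gap_def g2_den_def g2_num_def by algebra
  moreover have "0 \<le> (x - a) * ((3/5 + t^2) * (a + x) + 9/5 * t)"
    using assms by (intro mult_nonneg_nonneg add_nonneg_nonneg) auto
  ultimately show ?thesis by linarith
qed

lemma g2_lower_gap_pos:
  assumes "0 < t" "0 \<le> x" "x \<le> v" "0 < g2_lower_gap v t"
  shows "0 < g2_lower_gap x t"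
proof -
  have quadratic: "g2_lower_gap y t = 81 * t^2 + (t^3 - 57 * t) * y - (24 + 36 * t^2) * y^2" for y
    unfolding g2_lower_gap_def g2_num_def g2_den_def by algebra
  show ?thesis
    using concave_quadratic_pos[of "81 * t^2" "t^3 - 57 * t" v "24 + 36 * t^2" x] assms
    unfolding quadratic by simp
qed

text \<open>
  The polynomials in \<open>y\<close> below arise for \<open>0 < t \<le> 2\<close> with \<open>y = t\<^sup>2\<close>, those in \<open>u\<close> for
  \<open>t \<ge> 2\<close> with \<open>u = 1/t\<close>; the identities relating them to \<open>g2_deriv_num\<close>, its Taylor
  coefficients and the gaps appear in the next section.
\<close>

definition deriv_num_small :: "real \<Rightarrow> real" where
  "deriv_num_small y = 28445699481343345564924120560000 + 180700512016252863453098520240000 * y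
     + 512430235041549648199283395488000 * y^2 + 855962395437398313076355030688000 * y^3
     + 935900610509557009707171621840000 * y^4 + 704037946712750567211245711760000 * y^5
     + 372324796529898061616320382400000 * y^6 + 137939357148466807190308708800000 * y^7
     + 33996949606818773007403885200000 * y^8 + 4411817774679285890387067600000 * y^9
     - 208532290072986196909020000000 * y^10 - 189658278539819072060220000000 * y^11
     - 29170168915934707975314000000 * y^12 - 1675102873705529445450000000 * y^13
     - 25203713924705218560000000 * y^14"

definition deriv_num_taylor1_small :: "real \<Rightarrow> real" where
  "deriv_num_taylor1_small y = 108/5 + 192/5 * y - 12/5 * y^2"

definition deriv_num_taylor2_small :: "real \<Rightarrow> real" where
  "deriv_num_taylor2_small y = 54 + 54/5 * y - 126/5 * y^2 + 58/5 * y^3"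

definition deriv_num_taylor3_small :: "real \<Rightarrow> real" where
  "deriv_num_taylor3_small y = 27 + 378/5 * y + 228/5 * y^2 - 2 * y^3 + y^4"

definition upper_gap_small :: "real \<Rightarrow> real" where
  "upper_gap_small y = 1088686124826300 + 3197299250805660 * y + 3644559320301900 * y^2
     + 2029657395437100 * y^3 + 570076168533300 * y^4 + 74535440908500 * y^5
     + 3622762786500 * y^6 - 1913984761500 * y^7"

definition lower_gap_small :: "real \<Rightarrow> real" where
  "lower_gap_small y = 36189012459600 + 78699813192000 * y + 61119448996320 * y^2
     + 20215278008640 * y^3 + 2661700566096 * y^4 - 651075895296 * y^5"

definition deriv_num_large :: "real \<Rightarrow> real" where
  "deriv_num_large u = 50968855125/9528128 - 1122751125/22472 * u + 2292030000675/9528128 * u^2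
     - 198467273357325/252495392 * u^3 + 18473254708545/9528128 * u^4 - 962850629129805/252495392 * u^5
     + 58820949627543/9528128 * u^6 - 1059420766693041/126247696 * u^7
     + 460604551931451/47640640 * u^8 - 5989064602999647/631238480 * u^9
     + 377532079813197/47640640 * u^10 - 7076467525065693/1262476960 * u^11
     + 158281207473879/47640640 * u^12 - 2046068894654397/1262476960 * u^13
     + 30071523533841/47640640 * u^14 - 10459702407/56180 * u^15 + 9962028/265 * u^16
     - 19776/5 * u^17"

definition deriv_num_taylor1_large :: "real \<Rightarrow> real" where
  "deriv_num_taylor1_large u = 1124007/224720 - 333/265 * u - 4900931/224720 * u^2
     + 37148814/744385 * u^3 - 2800431/44944 * u^4 + 77103819/1488770 * u^5
     - 7123281/224720 * u^6 + 2997/530 * u^7 + 39/5 * u^8"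

definition deriv_num_taylor2_large :: "real \<Rightarrow> real" where
  "deriv_num_taylor2_large u = 999/212 - 2/5 * u - 4995/212 * u^2 + 177690/2809 * u^3
     - 80919/1060 * u^4 + 896877/14045 * u^5 - 50949/1060 * u^6 + 9/5 * u^7"

definition deriv_num_taylor3_large :: "real \<Rightarrow> real" where
  "deriv_num_taylor3_large u = 1 - 5 * u^2 + 7992/265 * u^3 - 81/5 * u^4
     + 7992/265 * u^5 - 51/5 * u^6"

definition upper_gap_large :: "real \<Rightarrow> real" where
  "upper_gap_large u = 680265/44944 - 14985/212 * u + 7696413/44944 * u^2
     - 28971/106 * u^3 + 69471447/224720 * u^4 - 266733/1060 * u^5 + 32159531/224720 * u^6
     - 17982/265 * u^7 + 48/5 * u^8"

definition lower_gap_large :: "real \<Rightarrow> real" where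
  "lower_gap_large u = 1731807/100 - 6082254801/62500 * u + 28945917/100 * u^2
     - 730631181/1250 * u^3 + 219161943/250 * u^4 - 158731039899/156250 * u^5
     + 230683761/250 * u^6 - 51159871854/78125 * u^7 + 888841107/2500 * u^8
     - 220237466721/1562500 * u^9 + 75174561/2500 * u^10 - 3747382947/781250 * u^11"

lemma deriv_num_small_pos:
  assumes "0 \<le> y" "y \<le> 4"
  shows "0 < deriv_num_small y"
  by (rule pos_by_geom_mix[where a = "0" and b = "4" and cs = 
        "[28445699481343345564924120560000, 751247747546354799377318201520000,
        8950131508211149170565852529328000, 63731724816204641207452574493360000,
        303322281106651235692488509684400000, 1024257138540507816516804118526640000,
        2549299505126970276897252404837040000, 4809297932647450445903270289816240000,
        7037322022079925553716491310283440000, 8193853580805452274166118759217840000,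
        7975191626209880699756046203697840000, 7179707149897203406537577216817840000,
        6690312925238080968938811570993840000, 6577898674300567417336112102193840000,
        6571133103860295622326378838833840000]",
      OF _ _ _ _ assms],
      unfold deriv_num_small_def geom_mix.simps, algebra) simp_all

lemma deriv_num_taylor1_small_pos:
  assumes "0 \<le> y" "y \<le> 4"
  shows "0 < deriv_num_taylor1_small y"
  by (rule pos_by_geom_mix[where a = "0" and b = "4" and cs = "[108/5, 876/5, 684/5]",
      OF _ _ _ _ assms],
      unfold deriv_num_taylor1_small_def geom_mix.simps, algebra) simp_all

lemma deriv_num_taylor2_small_pos:
  assumes "0 \<le> y" "y \<le> 4"
  shows "0 < deriv_num_taylor2_small y"
proof -
  have "0 < deriv_num_taylor2_small y" if "0 \<le> y" "y \<le> 1"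
    by (rule pos_by_geom_mix[where a = "0" and b = "1" and cs = "[54, 324/5, 198/5, 256/5]",
        OF _ _ _ _ that],
        unfold deriv_num_taylor2_small_def geom_mix.simps, algebra) simp_all
  moreover have "0 < deriv_num_taylor2_small y" if "1 \<le> y" "y \<le> 4"
    by (rule pos_by_geom_mix[where a = "1" and b = "4" and cs = "[256/5, 184/5, 616/5, 2182/5]",
        OF _ _ _ _ that],
        unfold deriv_num_taylor2_small_def geom_mix.simps, algebra) simp_all
  ultimately show ?thesis using assms by linarith
qed

lemma deriv_num_taylor3_small_pos:
  assumes "0 \<le> y" "y \<le> 4"
  shows "0 < deriv_num_taylor3_small y"
  by (rule pos_by_geom_mix[where a = "0" and b = "4" and cs = "[27, 1647/5, 1059, 931, 1187]",
      OF _ _ _ _ assms],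
      unfold deriv_num_taylor3_small_def geom_mix.simps, algebra) simp_all

lemma upper_gap_small_pos:
  assumes "0 \<le> y" "y \<le> 4"
  shows "0 < upper_gap_small y"
  by (rule pos_by_geom_mix[where a = "0" and b = "4" and cs = 
        "[1088686124826300, 13877883128048940, 72190832252879340, 202088905560853740,
        348028404705378540, 424352696195682540, 439191532569186540,
        407832806236770540]",
      OF _ _ _ _ assms],
      unfold upper_gap_small_def geom_mix.simps, algebra) simp_all

lemma lower_gap_small_pos:
  assumes "0 \<le> y" "y \<le> 4"
  shows "0 < lower_gap_small y"
  by (rule pos_by_geom_mix[where a = "0" and b = "4" and cs = 
        "[36189012459600, 350988265227600, 1328899449168720, 2622677241721680,
        3304072586642256, 2637370869859152]",
      OF _ _ _ _ assms],
      unfold lower_gap_small_def geom_mix.simps, algebra) simp_all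

lemma deriv_num_large_pos:
  assumes "0 \<le> u" "u \<le> 1/2"
  shows "0 < deriv_num_large u"
proof -
  have "0 < deriv_num_large u" if "0 \<le> u" "u \<le> 3/32"
    by (rule pos_by_geom_mix[where a = "0" and b = "3/32" and cs = 
          "[50968855125/9528128, 25357991625/38112512, 27119915862075/9756803072,
          17639072270391825/8273769005056, 1208206307768860485/529521216323584,
          19097328221423225145/8472339461177344,
          1224501671201845788171/542229725515350016,
          9793696416398008624701/4337837804122800128,
          6268125873897382299059223/2776216194638592081920,
          50144889108420477550421883/22209729557108736655360,
          6418546987401085513595892633/2842845383309918291886080,
          102696750544842375554721964257/45485526132958692670177280,
          1314518407865623912820373876663/582214734501871266178269184,
          105161472625987818327297827944809/46577178760149701294261534720,
          6730334248070843424683852982026013/2980939440649580882832738222080,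
          2692133699228253051953638435792497/1192375776259832353133095288832,
          26921336992282546480365617335189689/11923757762598323531330952888320,
          53842673984565092645867031901462851/23847515525196647062661905776640]",
        OF _ _ _ _ that],
        unfold deriv_num_large_def geom_mix.simps, algebra) simp_all
  moreover have "0 < deriv_num_large u" if "3/32 \<le> u" "u \<le> 13/64"
    by (rule pos_by_geom_mix[where a = "3/32" and b = "13/64" and cs = 
          "[53842673984565092645867031901462851/23847515525196647062661905776640,
          1091207359894886091616727519718183/47695031050393294125323811553280,
          56064044832755929606680338955139461/47695031050393294125323811553280,
          4576945357078137602388862230360591/5961878881299161765665476444160,
          41856470459799177823009534023586947/47695031050393294125323811553280,
          8143891241086114892506113813073791/9539006210078658825064762310656,
          65477847003323522088417709201611651/76312049680629270600518098485248,
          654280563784464959206908670831990881/763120496806292706005180984852480,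
          2617381594069542920174364021309806151/3052481987225170824020723939409920,
          5234705111173107165997242560539249083/6104963974450341648041447878819840,
          16358470928375512433830177248612969/19078012420157317650129524621312,
          2093884095094546337679559749590272461/2441985589780136659216579151527936,
          10469420539437423551890100285238338181/12209927948900683296082895757639680,
          20938841071458083255413894834112584443/24419855897801366592165791515279360,
          83755364287225710066817421333778683361/97679423591205466368663166061117440,
          167510728574350635671713435055666001579/195358847182410932737326332122234880,
          1340085828594825597148256918389461294231/1562870777459287461898610656977879040,
          2680171657189650627106418790164979929259/3125741554918574923797221313955758080]",
        OF _ _ _ _ that],
        unfold deriv_num_large_def geom_mix.simps, algebra) simp_all
  moreover have "0 < deriv_num_large u" if "13/64 \<le> u" "u \<le> 5/16"
    by (rule pos_by_geom_mix[where a = "13/64" and b = "5/16" and cs = 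
          "[2680171657189650627106418790164979929259/3125741554918574923797221313955758080,
          18160927837830844314590328318289684689/390717694364821865474652664244469760,
          87769021878121403217991660141433469567/195358847182410932737326332122234880,
          120924467596408390164867297729311679777/390717694364821865474652664244469760,
          54150768506698851593422581074434186443/156287077745928746189861065697787904,
          132214356451159481801538247294697784549/390717694364821865474652664244469760,
          16597887124385962429206082497016155807/48839711795602733184331583030558720,
          132694556532276911048406161697251405349/390717694364821865474652664244469760,
          530825649216336112014878037330695362149/1562870777459287461898610656977879040,
          132705029138511652977298983977951336787/390717694364821865474652664244469760,
          66352584713151595923781900978886616303/195358847182410932737326332122234880,
          132705157109757315492493854047329298979/390717694364821865474652664244469760,
          265410316076620189271922357958306312299/781435388729643730949305328488939520,
          132705157979209159971312785081246669367/390717694364821865474652664244469760,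
          33176289495581569093180525213172878287/97679423591205466368663166061117440,
          132705157982197112315461244968416702807/390717694364821865474652664244469760,
          1061641263857608279841173043198574979203/3125741554918574923797221313955758080,
          193111420932401908912848375/568569076661983658377216]",
        OF _ _ _ _ that],
        unfold deriv_num_large_def geom_mix.simps, algebra) simp_all
  moreover have "0 < deriv_num_large u" if "5/16 \<le> u" "u \<le> 13/32"
    by (rule pos_by_geom_mix[where a = "5/16" and b = "13/32" and cs = 
          "[193111420932401908912848375/568569076661983658377216,
          336762761989455972574485375/4548552613295869267017728,
          6497438890547952537328560525/36388420906366954136141824,
          42787688644491435510923318925/291107367250935633089134592,
          5587409860902911143351396635/36388420906366954136141824,
          177294862269837682013300602575/1164429469003742532356538368,
          177518552868503495633907797403/1164429469003742532356538368,
          709952346857278432452560770857/4657717876014970129426153472,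
          1774916295584901947232190500297/11644294690037425323565383680,
          14199301187248281198279571491747/93154357520299402588523069440,
          14199303838530758044505539463349/93154357520299402588523069440,
          56797214512613783999159601211479/372617430081197610354092277760,
          1419930364284525622713512904915/9315435752029940258852306944,
          227188858271642342513833673549913/1490469720324790441416369111040,
          227188858272348517015371013703769/1490469720324790441416369111040,
          181751086617855830375205170108235/1192375776259832353133095288832,
          454377716544641335857218223094701/2980939440649580882832738222080,
          3635021732357130371993543015841081/23847515525196647062661905776640]",
        OF _ _ _ _ that],
        unfold deriv_num_large_def geom_mix.simps, algebra) simp_all
  moreover have "0 < deriv_num_large u" if "13/32 \<le> u" "u \<le> 1/2"
    by (rule pos_by_geom_mix[where a = "13/32" and b = "1/2" and cs = 
          "[3635021732357130371993543015841081/23847515525196647062661905776640,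
          52327384002334584258086006043747/2384751552519664706266190577664,
          13643161357360709197548662284581/224976561558458934553414205440,
          542602034974239349683930945129399/11923757762598323531330952888320,
          113911476755670029776306871326911/2384751552519664706266190577664,
          563001889757127714760229363370891/11923757762598323531330952888320,
          563871144629269304116811698669941/11923757762598323531330952888320,
          563748105579738549319456388826339/11923757762598323531330952888320,
          2659256620949567353220579679963/56244140389614733638353551360,
          112752185213930809813271056134249/2384751552519664706266190577664,
          563761066595679026650212583299339/11923757762598323531330952888320,
          563761055343247041888032381197509/11923757762598323531330952888320,
          563761056201455340797487846695733/11923757762598323531330952888320,
          563761056148927959679392031863609/11923757762598323531330952888320,
          563761056151867577517546148832727/11923757762598323531330952888320,
          563761056151728969209980514704353/11923757762598323531330952888320,
          225504422460693333016431268084131/4769503105039329412532381155328,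
          1955939077895781/41368845025280]",
        OF _ _ _ _ that],
        unfold deriv_num_large_def geom_mix.simps, algebra) simp_all
  ultimately show ?thesis using assms by linarith
qed

lemma deriv_num_taylor1_large_pos:
  assumes "0 \<le> u" "u \<le> 1/2"
  shows "0 < deriv_num_taylor1_large u"
proof -
  have "0 < deriv_num_taylor1_large u" if "0 \<le> u" "u \<le> 1/4"
    by (rule pos_by_geom_mix[where a = "0" and b = "1/4" and cs = 
          "[1124007/224720, 1053411/224720, 2390729/719104, 782138441/190562560,
          11772100841/3049000960, 11926308479/3049000960, 190443401771/48784015360,
          190460238917/48784015360, 595206391/152450048]",
        OF _ _ _ _ that],
        unfold deriv_num_taylor1_large_def geom_mix.simps, algebra) simp_all
  moreover have "0 < deriv_num_taylor1_large u" if "1/4 \<le> u" "u \<le> 1/2"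
    by (rule pos_by_geom_mix[where a = "1/4" and b = "1/2" and cs = 
          "[595206391/152450048, 7438150077/3049000960, 114919128827/48784015360,
          123501196301/48784015360, 1125440621/460226560, 12017755211/4878401536,
          120080451923/48784015360, 120143738693/48784015360, 1877336639/762250240]",
        OF _ _ _ _ that],
        unfold deriv_num_taylor1_large_def geom_mix.simps, algebra) simp_all
  ultimately show ?thesis using assms by linarith
qed

lemma deriv_num_taylor2_large_pos:
  assumes "0 \<le> u" "u \<le> 1/2"
  shows "0 < deriv_num_taylor2_large u"
proof -
  have "0 < deriv_num_taylor2_large u" if "0 \<le> u" "u \<le> 1/4"
    by (rule pos_by_geom_mix[where a = "0" and b = "1/4" and cs = 
          "[999/212, 4889/1060, 53249/16960, 3710647/898880, 11016329/2876416,
          27989261/7191040, 178591211/46022656, 111622667/28764160]",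
        OF _ _ _ _ that],
        unfold deriv_num_taylor2_large_def geom_mix.simps, algebra) simp_all
  moreover have "0 < deriv_num_taylor2_large u" if "1/4 \<le> u" "u \<le> 1/2"
    by (rule pos_by_geom_mix[where a = "1/4" and b = "1/2" and cs = 
          "[111622667/28764160, 131165221/46022656, 691105799/230113280,
          367225483/115056640, 6584549/2170880, 139328269/46022656, 138823603/46022656,
          10845989/3595520]",
        OF _ _ _ _ that],
        unfold deriv_num_taylor2_large_def geom_mix.simps, algebra) simp_all
  ultimately show ?thesis using assms by linarith
qed

lemma deriv_num_taylor3_large_pos:
  assumes "0 \<le> u" "u \<le> 1/2"
  shows "0 < deriv_num_taylor3_large u"
proof -
  have "0 < deriv_num_taylor3_large u" if "0 \<le> u" "u \<le> 1/4"
    by (rule pos_by_geom_mix[where a = "0" and b = "1/4" and cs = 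
          "[1, 1, 11/16, 4913/4240, 14863/13568, 76313/67840, 243661/217088]",
        OF _ _ _ _ that],
        unfold deriv_num_taylor3_large_def geom_mix.simps, algebra) simp_all
  moreover have "0 < deriv_num_taylor3_large u" if "1/4 \<le> u" "u \<le> 1/2"
    by (rule pos_by_geom_mix[where a = "1/4" and b = "1/2" and cs = 
          "[243661/217088, 1943239/1085440, 300551/108544, 1753933/542720, 67141/20480,
          3574223/1085440, 11161/3392]",
        OF _ _ _ _ that],
        unfold deriv_num_taylor3_large_def geom_mix.simps, algebra) simp_all
  ultimately show ?thesis using assms by linarith
qed

lemma upper_gap_large_pos:
  assumes "0 \<le> u" "u \<le> 1/2"
  shows "0 < upper_gap_large u"
proof -
  have "0 < upper_gap_large u" if "0 \<le> u" "u \<le> 3/16"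
    by (rule pos_by_geom_mix[where a = "0" and b = "3/16" and cs = 
          "[680265/44944, 338445/179776, 90928197/11505664, 140398893/23011328,
          95482478727/14727249920, 378494660601/58908999680,
          24247102576563/3770175979520, 24245018264961/3770175979520,
          6061268388627/942543994880]",
        OF _ _ _ _ that],
        unfold upper_gap_large_def geom_mix.simps, algebra) simp_all
  moreover have "0 < upper_gap_large u" if "3/16 \<le> u" "u \<le> 3/8"
    by (rule pos_by_geom_mix[where a = "3/16" and b = "3/8" and cs = 
          "[6061268388627/942543994880, 510698974599/471271997440,
          13160285240463/3770175979520, 10330596490653/3770175979520,
          1095445887111/377017597952, 5417297027523/1885087989760,
          10844996279247/3770175979520, 10843354284021/3770175979520,
          169428274587/58908999680]",
        OF _ _ _ _ that],
        unfold upper_gap_large_def geom_mix.simps, algebra) simp_all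
  moreover have "0 < upper_gap_large u" if "3/8 \<le> u" "u \<le> 1/2"
    by (rule pos_by_geom_mix[where a = "3/8" and b = "1/2" and cs = 
          "[169428274587/58908999680, 80348337261/58908999680, 51470185599/29454499840,
          48277554759/29454499840, 96946998711/58908999680, 96764206209/58908999680,
          3023901007/1840906240, 24190933781/14727249920, 23623967/14382080]",
        OF _ _ _ _ that],
        unfold upper_gap_large_def geom_mix.simps, algebra) simp_all
  ultimately show ?thesis using assms by linarith
qed

lemma lower_gap_large_pos:
  assumes "0 \<le> u" "u \<le> 1/2"
  shows "0 < lower_gap_large u"
proof -
  have "0 < lower_gap_large u" if "0 \<le> u" "u \<le> 5/32"
    by (rule pos_by_geom_mix[where a = "0" and b = "5/32" and cs = 
          "[1731807/100, 844973199/400000, 117495132993/12800000,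
          1423277639763/204800000, 48969289831791/6553600000,
          1547175894629937/209715200000, 49599739472298609/6710886400000,
          396717978478616997/53687091200000, 101561538508313060607/13743895347200000,
          3249965791055600423799/439804651110400000,
          103998908984412074889693/14073748835532800000,
          1663982542286771734563213/225179981368524800000]",
        OF _ _ _ _ that],
        unfold lower_gap_large_def geom_mix.simps, algebra) simp_all
  moreover have "0 < lower_gap_large u" if "5/32 \<le> u" "u \<le> 5/16"
    by (rule pos_by_geom_mix[where a = "5/32" and b = "5/16" and cs = 
          "[1663982542286771734563213/225179981368524800000,
          74122008052752286378419/56294995342131200000,
          913522613069382463810551/225179981368524800000,
          89903413617147851133897/28147497671065600000,
          382883332277270178246213/112589990684262400000,
          23654621053529201725443/7036874417766400000,
          379142290823485184253963/112589990684262400000,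
          94764997474721885548647/28147497671065600000,
          758134966940713822779801/225179981368524800000,
          189533427958014341331669/56294995342131200000,
          758133754460147046186051/225179981368524800000,
          370182496580237100837/109951162777600000]",
        OF _ _ _ _ that],
        unfold lower_gap_large_def geom_mix.simps, algebra) simp_all
  moreover have "0 < lower_gap_large u" if "5/16 \<le> u" "u \<le> 1/2"
    by (rule pos_by_geom_mix[where a = "5/16" and b = "1/2" and cs = 
          "[370182496580237100837/109951162777600000,
          94493233897023546723/274877906944000000,
          1040355416991801514821/549755813888000000,
          90697215642294584937/68719476736000000,
          407425889097714742113/274877906944000000,
          991500751414811447517/687194767360000000,
          1992241240268504554149/1374389534720000000,
          497594171205109064589/343597383680000000,
          159241404795945592449/109951162777600000,
          9952444611757191620523/6871947673600000000,
          19904899248070785628881/13743895347200000000, 289654396827/200000000]",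
        OF _ _ _ _ that],
        unfold lower_gap_large_def geom_mix.simps, algebra) simp_all
  ultimately show ?thesis using assms by linarith
qed

section \<open>Positivity along the curve x = arctan t\<close>

lemma g2_deriv_num_arctan_pos_small:
  assumes "0 < t" "t \<le> 2"
  shows "0 < g2_deriv_num (arctan t) t"
proof -
  define a where "a = pade_P9 t / pade_Q9 t"
  define p where "p = 3 * t / (3 + t^2)"
  have Q: "0 < pade_Q9 t" "0 < 3 + t^2" by (simp_all add: pade_Q_pos add_pos_nonneg)
  have y: "0 \<le> t^2" "t^2 \<le> 4" using power_mono[of t 2 2] assms by simp_all
  have aQ: "a * pade_Q9 t = pade_P9 t" and pQ: "(3 + t^2) * p = 3 * t"
    using Q by (simp_all add: a_def p_def)
  have "(3 + t^2) * pade_P9 t - 3 * t * pade_Q9 t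
      = t^5 * (174594420 + 263860740 * t^2 + 110810700 * t^4 + 11173500 * t^6)"
    unfolding pade_P9_def pade_Q9_def by algebra
  also have "\<dots> > 0" using assms by (intro mult_pos_pos add_pos_nonneg) simp_all
  finally have "p \<le> a" using Q by (simp add: a_def p_def field_simps)
  have "g2_deriv_num a t \<le> g2_deriv_num (arctan t) t"
  proof (rule quartic_expansion_mono[where f = "\<lambda>x. g2_deriv_num x t" and p = p
        and s = "(3 + t^2)^3"])
    show "(3 + t^2)^3 * (g2_deriv_num (p + h) t - g2_deriv_num p t)
        = t^8 * deriv_num_taylor1_small (t^2) * h
          + (3 + t^2) * t^3 * deriv_num_taylor2_small (t^2) * h^2
          + (3 + t^2)^2 * deriv_num_taylor3_small (t^2) * h^3
          + (3 + t^2)^3 * (24/5 * t * (1 + t^2)) * h^4" for h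
      using pQ unfolding g2_deriv_num_def deriv_num_taylor1_small_def deriv_num_taylor2_small_def
        deriv_num_taylor3_small_def by algebra
    show "a \<le> arctan t" using pade9_lt_arctan[OF assms(1)] by (simp add: a_def)
  qed (use \<open>p \<le> a\<close> assms Q deriv_num_taylor1_small_pos[OF y] deriv_num_taylor2_small_pos[OF y]
         deriv_num_taylor3_small_pos[OF y] in simp_all)
  moreover have "(pade_Q9 t)^4 * g2_deriv_num a t = t^17 * deriv_num_small (t^2)"
    using aQ unfolding g2_deriv_num_def pade_P9_def pade_Q9_def deriv_num_small_def by algebra
  then have "0 < g2_deriv_num a t"
    by (rule pos_of_scaled_eq) (use deriv_num_small_pos[OF y] Q assms in simp_all)
  ultimately show ?thesis by linarith
qed

lemma g2_deriv_num_arctan_pos_large: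
  assumes "0 < u" "u \<le> 1/2"
  shows "0 < g2_deriv_num (arctan (1 / u)) (1 / u)"
proof -
  define t where "t = 1 / u"
  define l where "l = 333/212 - pade_P2 u / pade_Q2 u"
  have tu: "t * u = 1" using assms by (simp add: t_def)
  have Q: "0 < pade_Q2 u" by (rule pade_Q_pos)
  have lQ: "l * pade_Q2 u = 333/212 * pade_Q2 u - pade_P2 u"
    using Q by (simp add: l_def field_simps)
  have "333/212 - u \<le> l" using pade2_le_self[of u] assms unfolding l_def by linarith
  have "g2_deriv_num l t \<le> g2_deriv_num (arctan t) t"
  proof (rule quartic_expansion_mono[where f = "\<lambda>x. g2_deriv_num x t" and p = "333/212 - u"
        and s = "u^6"])
    show "u^6 * (g2_deriv_num (333/212 - u + h) t - g2_deriv_num (333/212 - u) t)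
        = deriv_num_taylor1_large u * h + deriv_num_taylor2_large u * h^2
          + deriv_num_taylor3_large u * h^3 + 24/5 * (u^3 + u^5) * h^4" for h
      using tu unfolding g2_deriv_num_def deriv_num_taylor1_large_def deriv_num_taylor2_large_def
        deriv_num_taylor3_large_def by algebra
    show "l \<le> arctan t" using arctan_inverse_bounds(1)[OF assms(1)] by (simp add: l_def t_def)
  qed (use \<open>333/212 - u \<le> l\<close> assms deriv_num_taylor1_large_pos[of u]
         deriv_num_taylor2_large_pos[of u] deriv_num_taylor3_large_pos[of u] in simp_all)
  moreover have "u^6 * (pade_Q2 u)^4 * g2_deriv_num l t = deriv_num_large u"
    using lQ tu unfolding g2_deriv_num_def pade_P2_def pade_Q2_def deriv_num_large_def by algebra
  then have "0 < g2_deriv_num l t"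
    by (rule pos_of_scaled_eq) (use deriv_num_large_pos[of u] Q assms in simp_all)
  ultimately show ?thesis unfolding t_def by linarith
qed

lemma g2_upper_gap_arctan_pos_small:
  assumes "0 < t" "t \<le> 2"
  shows "0 < g2_upper_gap (arctan t) t"
proof -
  define a where "a = pade_P9 t / pade_Q9 t"
  have Q: "0 < pade_Q9 t" by (rule pade_Q_pos)
  have y: "0 \<le> t^2" "t^2 \<le> 4" using power_mono[of t 2 2] assms by simp_all
  have "0 \<le> a" using assms Q by (simp add: a_def pade_P9_def)
  moreover have "a \<le> arctan t" using pade9_lt_arctan[OF assms(1)] by (simp add: a_def)
  ultimately have "g2_upper_gap a t \<le> g2_upper_gap (arctan t) t"
    using assms by (intro g2_upper_gap_mono) simp_all
  moreover have "a * pade_Q9 t = pade_P9 t" using Q by (simp add: a_def)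
  then have "(pade_Q9 t)^2 * g2_upper_gap a t = t^8 * upper_gap_small (t^2)"
    unfolding g2_upper_gap_def g2_den_def g2_num_def upper_gap_small_def pade_P9_def pade_Q9_def
    by algebra
  then have "0 < g2_upper_gap a t"
    by (rule pos_of_scaled_eq) (use upper_gap_small_pos[OF y] Q assms in simp_all)
  ultimately show ?thesis by linarith
qed

lemma g2_upper_gap_arctan_pos_large:
  assumes "0 < u" "u \<le> 1/2"
  shows "0 < g2_upper_gap (arctan (1 / u)) (1 / u)"
proof -
  define t where "t = 1 / u"
  define l where "l = 333/212 - pade_P2 u / pade_Q2 u"
  have tu: "t * u = 1" using assms by (simp add: t_def)
  have Q: "0 < pade_Q2 u" by (rule pade_Q_pos)
  have "0 \<le> l" using pade2_le_self[of u] assms unfolding l_def by linarith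
  moreover have "l \<le> arctan t"
    using arctan_inverse_bounds(1)[OF assms(1)] by (simp add: l_def t_def)
  ultimately have "g2_upper_gap l t \<le> g2_upper_gap (arctan t) t"
    using assms by (intro g2_upper_gap_mono) (simp_all add: t_def)
  moreover have "l * pade_Q2 u = 333/212 * pade_Q2 u - pade_P2 u"
    using Q by (simp add: l_def field_simps)
  then have "u^2 * (pade_Q2 u)^2 * g2_upper_gap l t = upper_gap_large u"
    using tu unfolding g2_upper_gap_def g2_den_def g2_num_def upper_gap_large_def pade_P2_def
      pade_Q2_def by algebra
  then have "0 < g2_upper_gap l t"
    by (rule pos_of_scaled_eq) (use upper_gap_large_pos[of u] Q assms in simp_all)
  ultimately show ?thesis unfolding t_def by linarith
qed

lemma g2_lower_gap_arctan_pos_small: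
  assumes "0 < t" "t \<le> 2"
  shows "0 < g2_lower_gap (arctan t) t"
proof (rule g2_lower_gap_pos)
  define v where "v = pade_P8 t / pade_Q8 t"
  have Q: "0 < pade_Q8 t" by (rule pade_Q_pos)
  have y: "0 \<le> t^2" "t^2 \<le> 4" using power_mono[of t 2 2] assms by simp_all
  show "arctan t \<le> v" using arctan_lt_pade8[OF assms(1)] by (simp add: v_def)
  have "v * pade_Q8 t = pade_P8 t" using Q by (simp add: v_def)
  then have "(pade_Q8 t)^2 * g2_lower_gap v t = t^10 * lower_gap_small (t^2)"
    unfolding g2_lower_gap_def g2_den_def g2_num_def lower_gap_small_def pade_P8_def pade_Q8_def
    by algebra
  then show "0 < g2_lower_gap v t"
    by (rule pos_of_scaled_eq) (use lower_gap_small_pos[OF y] Q assms in simp_all)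
qed (use assms in \<open>simp_all add: less_imp_le\<close>)

lemma g2_lower_gap_arctan_pos_large:
  assumes "0 < u" "u \<le> 1/2"
  shows "0 < g2_lower_gap (arctan (1 / u)) (1 / u)"
proof (rule g2_lower_gap_pos)
  define t where "t = 1 / u"
  define v where "v = 3927/2500 - pade_P3 u / pade_Q3 u"
  have tu: "t * u = 1" using assms by (simp add: t_def)
  have Q: "0 < pade_Q3 u" by (rule pade_Q_pos)
  show "arctan (1 / u) \<le> v" using arctan_inverse_bounds(2)[OF assms(1)] by (simp add: v_def)
  have "v * pade_Q3 u = 3927/2500 * pade_Q3 u - pade_P3 u" using Q by (simp add: v_def field_simps)
  then have "u^3 * (pade_Q3 u)^2 * g2_lower_gap v t = lower_gap_large u"
    using tu unfolding g2_lower_gap_def g2_den_def g2_num_def lower_gap_large_def pade_P3_def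
      pade_Q3_def by algebra
  then have "0 < g2_lower_gap v t"
    by (rule pos_of_scaled_eq) (use lower_gap_large_pos[of u] Q assms in simp_all)
  then show "0 < g2_lower_gap v (1 / u)" by (simp add: t_def)
qed (use assms in \<open>simp_all add: less_imp_le\<close>)

lemma arctan_cases_small_large:
  assumes "\<And>t. 0 < t \<Longrightarrow> t \<le> 2 \<Longrightarrow> P (arctan t) t"
    and "\<And>u. 0 < u \<Longrightarrow> u \<le> 1/2 \<Longrightarrow> P (arctan (1 / u)) (1 / u)"
    and "0 < t"
  shows "P (arctan t) t"
proof (cases "t \<le> 2")
  case False
  then show ?thesis using assms(2)[of "1 / t"] by (simp add: field_simps)
qed (use assms in simp)

lemma g2_tan_pos:
  assumes "0 < x" "x < pi/2"
  shows "0 < g2_den x (tan x)" "0 < g2_deriv_num x (tan x)"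
    and "0 < g2_upper_gap x (tan x)" "0 < g2_lower_gap x (tan x)"
proof -
  have t: "0 < tan x" "arctan (tan x) = x" using assms by (simp_all add: tan_gt_zero arctan_tan)
  show "0 < g2_den x (tan x)" using g2_den_arctan_pos[OF t(1)] t(2) by simp
  show "0 < g2_deriv_num x (tan x)"
    using arctan_cases_small_large[where P = "\<lambda>x t. 0 < g2_deriv_num x t", OF
        g2_deriv_num_arctan_pos_small g2_deriv_num_arctan_pos_large t(1)] t(2) by simp
  show "0 < g2_upper_gap x (tan x)"
    using arctan_cases_small_large[where P = "\<lambda>x t. 0 < g2_upper_gap x t", OF
        g2_upper_gap_arctan_pos_small g2_upper_gap_arctan_pos_large t(1)] t(2) by simp
  show "0 < g2_lower_gap x (tan x)"
    using arctan_cases_small_large[where P = "\<lambda>x t. 0 < g2_lower_gap x t", OF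
        g2_lower_gap_arctan_pos_small g2_lower_gap_arctan_pos_large t(1)] t(2) by simp
qed

lemma g2_strict_mono: "strict_mono_on {0<..<pi/2} g2"
proof (rule strict_mono_onI)
  fix a b :: real assume ab: "a \<in> {0<..<pi/2}" "b \<in> {0<..<pi/2}" "a < b"
  show "g2 a < g2 b"
  proof (rule DERIV_pos_imp_increasing[OF \<open>a < b\<close>])
    fix y assume "a \<le> y" "y \<le> b"
    with ab have y: "0 < y" "y < pi/2" by auto
    let ?d = "g2_deriv_num y (tan y) / (g2_den y (tan y))^2"
    have "(g2 has_real_derivative ?d) (at y)" "0 < ?d"
      using g2_has_derivative[OF y] g2_tan_pos(1,2)[OF y] by simp_all
    then show "\<exists>d. (g2 has_real_derivative d) (at y) \<and> 0 < d" by blast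
  qed
qed

lemma g2_bounds:
  assumes "0 < x" "x < pi/2"
  shows "34/35 < g2 x" "g2 x < 1"
  using g2_tan_pos[OF assms] unfolding g2_eq[OF assms] g2_upper_gap_def g2_lower_gap_def
  by (simp_all add: less_divide_eq divide_less_eq)

theorem lemma7:
  shows "(\<forall>x\<in>{0<..<pi/2}. lemB x - 3 * lemA x > 0)
       \<and> strict_mono_on {0<..<pi/2} g2
       \<and> (\<forall>x\<in>{0<..<pi/2}. 34/35 < g2 x \<and> g2 x < 1)"
proof (intro conjI ballI g2_strict_mono)
  fix x :: real assume "x \<in> {0<..<pi/2}"
  then have x: "0 < x" "x < pi/2" by simp_all
  then have "0 < cos x" by (simp add: cos_gt_zero_pi)
  then show "lemB x - 3 * lemA x > 0" using lemB_lemC_tan(1) g2_tan_pos(1)[OF x] by simp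
  show "34/35 < g2 x" "g2 x < 1" using g2_bounds[OF x] by simp_all
qed

end
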